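(* Let $\tau>0$, $a>0$, and let $s,d$ be integers with $1\le s<d/2$. The estimator $\hat\sigma^2=\frac1d\sum_{k=1}^{d-s}Y^2_{(k)}$ satisfies $$\sup_{P_\xi\in\mathcal G_{a,\tau}}\sup_{\sigma>0}\sup_{\theta\in\Theta_s}\frac{\mathbf E_{\theta,P_\xi,\sigma}(\hat\sigma^2-\sigma^2)^2}{\sigma^4}\le C\max\Big(\frac1{\sqrt d},\frac sd\log^{2/a}\Big(\frac{ed}{s}\Big)\Big)^2,$$ where $C>0$ depends only on $a$ and $\tau$.
   Context: Model: $Y_i=\theta_i+\sigma\xi_i$, $i=1,\dots,d$, $\theta\in\mathbb R^d$, $\sigma>0$, $\xi_i$ i.i.d. with distribution $P_\xi$, $\mathbf E\xi_1=0,\mathbf E\xi_1^2=1$; $\mathbf E_{\theta,P_\xi,\sigma}$ expectation; $\Theta_s=\{\theta:\|\theta\|_0\le s\}$. $\mathcal G_{a,\tau}$: distributions with $\mathbf E\xi_1=0,\mathbf E\xi_1^2=1$, $\mathbf P(|\xi_1|>t)\le2e^{-(t/\tau)^a}$ for all $t\ge2$. $Y^2_{(1)}\le\dots\le Y^2_{(d)}$ are the ordered values of $Y_1^2,\dots,Y_d^2$. *)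

theory Defs
  imports "HOL-Probability.Probability"
begin

definition noise_class :: "real \<Rightarrow> real \<Rightarrow> real measure \<Rightarrow> bool" where
  "noise_class a \<tau> P \<longleftrightarrow>
     prob_space P \<and> sets P = sets borel \<and>
     integrable P (\<lambda>x. x) \<and> integrable P (\<lambda>x. x\<^sup>2) \<and>
     (\<integral>x. x \<partial>P) = 0 \<and> (\<integral>x. x\<^sup>2 \<partial>P) = 1 \<and>
     (\<forall>t\<ge>2. measure P {x. \<bar>x\<bar> > t} \<le> 2 * exp (- ((t / \<tau>) powr a)))"

definition sparse_vecs :: "nat \<Rightarrow> nat \<Rightarrow> (nat \<Rightarrow> real) set" where
  "sparse_vecs d s = {\<theta>. card {i\<in>{..<d}. \<theta> i \<noteq> 0} \<le> s}"

definition obs :: "(nat \<Rightarrow> real) \<Rightarrow> real \<Rightarrow> (nat \<Rightarrow> real) \<Rightarrow> nat \<Rightarrow> real" where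
  "obs \<theta> \<sigma> \<xi> i = \<theta> i + \<sigma> * \<xi> i"

definition sigma_hat_sq :: "nat \<Rightarrow> nat \<Rightarrow> (nat \<Rightarrow> real) \<Rightarrow> real" where
  "sigma_hat_sq d s Y = sum_list (take (d - s) (sort (map (\<lambda>i. (Y i)\<^sup>2) [0..<d]))) / real d"

end

theory Submission
  imports Defs
begin

(*
  Let J be the support of theta. Off J the squared observations are sigma^2 xi_i^2, so the sum of
  the d - s smallest squares lies between sigma^2 (V - 2 R) and sigma^2 V, where V = sum_i xi_i^2 and
  R = s r^2 + sum_i (xi_i^2 - r^2)_+ bounds the sum of any s of the xi_i^2. The error is therefore
  governed by V - d, whose second moment is of order d, and by the excesses over the threshold r.
  Taking r of order tau log^(1/a)(e d / s) makes P(|xi| > r) <= 2 (s/d)^2, and an AM-GM split against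
  the fourth and eighth moments, which are bounded uniformly over the noise class, makes the excesses
  of order s/d.
*)

lemma sort_map_eq_map_sort_key: "sort (map f xs) = map f (sort_key f xs)"
  by (rule properties_for_sort) simp_all

lemma sum_list_take_sort_map:
  assumes "distinct xs"
  shows "sum_list (take m (sort (map f xs))) = sum f (set (take m (sort_key f xs)))"
  using assms by (simp add: sort_map_eq_map_sort_key take_map sum_list_distinct_conv_sum_set)

lemma sum_list_take_sort_eq_sum:
  assumes "distinct xs" "m \<le> length xs"
  obtains K where "K \<subseteq> set xs" "card K = m" "sum_list (take m (sort (map f xs))) = sum f K"
proof
  show "set (take m (sort_key f xs)) \<subseteq> set xs"
    by (metis set_sort set_take_subset)
  show "card (set (take m (sort_key f xs))) = m"
    using assms by (simp add: distinct_card)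
qed (rule sum_list_take_sort_map[OF assms(1)])

lemma sum_le_sum_if_card_eq:
  fixes f :: "'a \<Rightarrow> 'b::ordered_comm_monoid_add"
  assumes "finite A" "finite B" "card A = card B" "\<And>x y. x \<in> A \<Longrightarrow> y \<in> B \<Longrightarrow> f x \<le> f y"
  shows "sum f A \<le> sum f B"
proof -
  obtain h where h: "bij_betw h A B" using finite_same_card_bij assms by blast
  have "sum f A \<le> sum (f \<circ> h) A"
    using h assms(4) by (intro sum_mono) (auto simp: bij_betw_def)
  also have "\<dots> = sum f B" using sum.reindex_bij_betw[OF h] by simp
  finally show ?thesis .
qed

lemma sum_list_take_sort_le_sum:
  fixes f :: "'a \<Rightarrow> 'b::{linorder, ordered_comm_monoid_add}"
  assumes "distinct xs" "K \<subseteq> set xs" "card K = m"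
  shows "sum_list (take m (sort (map f xs))) \<le> sum f K"
proof -
  define ys where "ys = sort_key f xs"
  define K' where "K' = set (take m ys)"
  have ys: "distinct ys" "set ys = set xs" "length ys = length xs"
    using assms(1) by (simp_all add: ys_def)
  have "m \<le> length xs"
    using assms card_mono[OF _ assms(2)] by (auto simp: distinct_card)
  then have card_K': "card K' = m" using ys by (simp add: K'_def distinct_card)
  have fin: "finite K" "finite K'" using assms(2) finite_subset by (auto simp: K'_def)
  have below: "f x \<le> f y" if "x \<in> K' - K" "y \<in> K - K'" for x y
  proof -
    have "sorted (map f (take m ys) @ map f (drop m ys))"
      by (metis append_take_drop_id map_append sorted_sort_key ys_def)
    moreover have "y \<in> set (take m ys) \<union> set (drop m ys)"
      using that assms(2) ys by (metis append_take_drop_id set_append DiffD1 subsetD)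
    then have "y \<in> set (drop m ys)" using that by (auto simp: K'_def)
    ultimately show ?thesis using that unfolding K'_def sorted_append by auto
  qed
  have "card (K' - K) = card (K - K')"
    using fin card_K' assms(3) by (simp add: card_Diff_subset_Int Int_commute)
  then have "sum f (K' - K) \<le> sum f (K - K')"
    using fin below by (intro sum_le_sum_if_card_eq) auto
  then have "sum f (K' \<inter> K) + sum f (K' - K) \<le> sum f (K \<inter> K') + sum f (K - K')"
    by (simp add: Int_commute add_left_mono)
  then have "sum f K' \<le> sum f K"
    using fin by (simp only: sum.Int_Diff[symmetric])
  then show ?thesis using assms(1) by (simp add: sum_list_take_sort_map K'_def ys_def)
qed

lemma sum_le_card_mult_add_excess:
  fixes g :: "'a \<Rightarrow> real"
  assumes "finite I" "B \<subseteq> I"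
  shows "sum g B \<le> real (card B) * u + (\<Sum>i\<in>I. max 0 (g i - u))"
proof -
  have "sum g B \<le> (\<Sum>i\<in>B. u + max 0 (g i - u))"
    by (intro sum_mono) simp
  also have "\<dots> = real (card B) * u + (\<Sum>i\<in>B. max 0 (g i - u))"
    by (simp add: sum.distrib)
  also have "\<dots> \<le> real (card B) * u + (\<Sum>i\<in>I. max 0 (g i - u))"
    using assms by (intro add_left_mono sum_mono2) auto
  finally show ?thesis .
qed

lemma trimmed_sum_le:
  fixes f g :: "nat \<Rightarrow> real"
  assumes "J \<subseteq> {..<d}" "card J \<le> s" and "\<And>i. i < d \<Longrightarrow> i \<notin> J \<Longrightarrow> f i = c * g i"
    and "c \<ge> 0" and "\<And>i. g i \<ge> 0"
  shows "sum_list (take (d - s) (sort (map f [0..<d]))) \<le> c * (\<Sum>i<d. g i)"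
proof -
  have "d - s \<le> card ({..<d} - J)"
    using assms(1,2) diff_card_le_card_Diff[of J "{..<d}"] finite_subset by fastforce
  then obtain K where K: "K \<subseteq> {..<d} - J" "card K = d - s"
    by (meson obtain_subset_with_card_n)
  have "sum_list (take (d - s) (sort (map f [0..<d]))) \<le> sum f K"
    using K by (intro sum_list_take_sort_le_sum) auto
  also have "\<dots> = c * sum g K"
    using K assms(3) by (auto simp: sum_distrib_left intro: sum.cong)
  also have "\<dots> \<le> c * (\<Sum>i<d. g i)"
    using K assms(4,5) by (intro mult_left_mono sum_mono2) auto
  finally show ?thesis .
qed

lemma trimmed_sum_ge:
  fixes f g :: "nat \<Rightarrow> real"
  assumes J: "J \<subseteq> {..<d}" "card J \<le> s" and fg: "\<And>i. i < d \<Longrightarrow> i \<notin> J \<Longrightarrow> f i = c * g i"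
    and "c \<ge> 0" and "\<And>i. f i \<ge> 0"
    and R: "\<And>B. B \<subseteq> {..<d} \<Longrightarrow> card B \<le> s \<Longrightarrow> sum g B \<le> R"
  shows "c * ((\<Sum>i<d. g i) - 2 * R) \<le> sum_list (take (d - s) (sort (map f [0..<d])))"
proof -
  obtain K where K: "K \<subseteq> {..<d}" "card K = d - s"
    and S: "sum_list (take (d - s) (sort (map f [0..<d]))) = sum f K"
    by (rule sum_list_take_sort_eq_sum[of "[0..<d]" "d - s" f]) (auto simp: atLeast0LessThan)
  define Jc where "Jc = {..<d} - J"
  have fin: "finite J" "finite K" using J K finite_subset by auto
  have "card ({..<d} - (J \<union> K)) \<le> s"
  proof -
    have "d - s \<le> card (J \<union> K)" using K fin card_mono[of "J \<union> K" K] by auto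
    then show ?thesis using J K fin by (subst card_Diff_subset) auto
  qed
  moreover have "Jc - K = {..<d} - (J \<union> K)" by (auto simp: Jc_def)
  \<comment> \<open>outside \<open>K \<inter> Jc\<close> only the two sets \<open>J\<close> and \<open>Jc - K\<close> of at most \<open>s\<close> indices remain\<close>
  ultimately have small: "sum g J \<le> R" "sum g (Jc - K) \<le> R"
    using J R by (auto simp: Jc_def)
  have split: "{..<d} = J \<union> ((Jc - K) \<union> (K \<inter> Jc))" using J by (auto simp: Jc_def)
  have "(\<Sum>i<d. g i) = sum g J + sum g ((Jc - K) \<union> (K \<inter> Jc))"
    using fin by (subst split, subst sum.union_disjoint) (auto simp: Jc_def)
  also have "\<dots> = sum g J + sum g (Jc - K) + sum g (K \<inter> Jc)"
    using fin by (subst sum.union_disjoint) (auto simp: Jc_def)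
  finally have "(\<Sum>i<d. g i) = sum g J + sum g (Jc - K) + sum g (K \<inter> Jc)" .
  then have "(\<Sum>i<d. g i) - 2 * R \<le> sum g (K \<inter> Jc)" using small by linarith
  then have "c * ((\<Sum>i<d. g i) - 2 * R) \<le> sum f (K \<inter> Jc)"
    using assms(4) fg by (auto simp: sum_distrib_left Jc_def intro: mult_left_mono order_trans
        intro!: sum.cong)
  also have "\<dots> \<le> sum f K" using fin assms(5) by (intro sum_mono2) auto
  finally show ?thesis using S by simp
qed

lemma power2_add_le: "(x + y)\<^sup>2 \<le> 2 * x\<^sup>2 + 2 * (y::real)\<^sup>2"
proof -
  have "0 \<le> (x - y)\<^sup>2" by simp
  then show ?thesis by (simp add: power2_eq_square algebra_simps)
qed

lemma power2_le_of_two_sided_bound: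
  fixes z A R :: real
  assumes "z \<le> A" "A - 2 * R \<le> z" "0 \<le> R"
  shows "z\<^sup>2 \<le> 2 * A\<^sup>2 + 8 * R\<^sup>2"
proof -
  have "\<bar>z\<bar> \<le> \<bar>A\<bar> + 2 * R" using assms by linarith
  then have "z\<^sup>2 \<le> (\<bar>A\<bar> + 2 * R)\<^sup>2"
    using power_mono[OF _ abs_ge_zero, of z _ 2] by simp
  also have "\<dots> \<le> 2 * A\<^sup>2 + 8 * R\<^sup>2"
    using power2_add_le[of "\<bar>A\<bar>" "2 * R"] by (simp add: power_mult_distrib)
  finally show ?thesis .
qed

lemma sigma_hat_sq_error_le:
  fixes \<theta> \<xi> :: "nat \<Rightarrow> real"
  assumes J: "card {i\<in>{..<d}. \<theta> i \<noteq> 0} \<le> s" and "d > 0" "\<sigma> > 0" "u \<ge> 0"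
  shows "(sigma_hat_sq d s (obs \<theta> \<sigma> \<xi>) - \<sigma>\<^sup>2)\<^sup>2 \<le> \<sigma> ^ 4 / (real d)\<^sup>2 *
     (2 * (\<Sum>i<d. (\<xi> i)\<^sup>2 - 1)\<^sup>2 + 16 * (real s * u)\<^sup>2 + 16 * (\<Sum>i<d. max 0 ((\<xi> i)\<^sup>2 - u))\<^sup>2)"
proof -
  define f where "f = (\<lambda>i. (obs \<theta> \<sigma> \<xi> i)\<^sup>2)"
  define V where "V = (\<Sum>i<d. (\<xi> i)\<^sup>2)"
  define E where "E = (\<Sum>i<d. max 0 ((\<xi> i)\<^sup>2 - u))"
  define R where "R = real s * u + E"
  define S where "S = sum_list (take (d - s) (sort (map f [0..<d])))"
  have E0: "E \<ge> 0" by (simp add: E_def sum_nonneg)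
  have fg: "f i = \<sigma>\<^sup>2 * (\<xi> i)\<^sup>2" if "i \<notin> {i\<in>{..<d}. \<theta> i \<noteq> 0}" "i < d" for i
    using that by (simp add: f_def obs_def power_mult_distrib)
  have "S \<le> \<sigma>\<^sup>2 * V"
    unfolding S_def V_def using J fg by (intro trimmed_sum_le) auto
  moreover have "\<sigma>\<^sup>2 * (V - 2 * R) \<le> S"
    unfolding S_def V_def
  proof (rule trimmed_sum_ge[OF _ J])
    fix B assume "B \<subseteq> {..<d}" "card B \<le> s"
    then have "(\<Sum>i\<in>B. (\<xi> i)\<^sup>2) \<le> real (card B) * u + E"
      using sum_le_card_mult_add_excess[of "{..<d}" B "\<lambda>i. (\<xi> i)\<^sup>2" u] by (simp add: E_def)
    also have "\<dots> \<le> R"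
      using \<open>card B \<le> s\<close> \<open>u \<ge> 0\<close> by (simp add: R_def mult_right_mono)
    finally show "(\<Sum>i\<in>B. (\<xi> i)\<^sup>2) \<le> R" .
  qed (use fg in \<open>auto simp: f_def\<close>)
  ultimately have "S / \<sigma>\<^sup>2 - d \<le> V - d" "(V - d) - 2 * R \<le> S / \<sigma>\<^sup>2 - d"
    using \<open>\<sigma> > 0\<close> by (simp_all add: field_simps)
  then have "(S / \<sigma>\<^sup>2 - d)\<^sup>2 \<le> 2 * (V - d)\<^sup>2 + 8 * R\<^sup>2"
    using E0 \<open>u \<ge> 0\<close> by (intro power2_le_of_two_sided_bound) (auto simp: R_def)
  also have "\<dots> \<le> 2 * (V - d)\<^sup>2 + 16 * (real s * u)\<^sup>2 + 16 * E\<^sup>2"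
    using power2_add_le[of "real s * u" E] by (simp add: R_def)
  finally have z: "(S / \<sigma>\<^sup>2 - d)\<^sup>2 \<le> 2 * (V - d)\<^sup>2 + 16 * (real s * u)\<^sup>2 + 16 * E\<^sup>2" .
  have "sigma_hat_sq d s (obs \<theta> \<sigma> \<xi>) = S / real d"
    by (simp add: sigma_hat_sq_def S_def f_def)
  then have "sigma_hat_sq d s (obs \<theta> \<sigma> \<xi>) - \<sigma>\<^sup>2 = \<sigma>\<^sup>2 / real d * (S / \<sigma>\<^sup>2 - d)"
    using assms by (simp add: field_simps)
  then have "(sigma_hat_sq d s (obs \<theta> \<sigma> \<xi>) - \<sigma>\<^sup>2)\<^sup>2 = \<sigma> ^ 4 / (real d)\<^sup>2 * (S / \<sigma>\<^sup>2 - d)\<^sup>2"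
    by (simp add: power_mult_distrib power_divide flip: power_mult)
  also have "\<dots> \<le> \<sigma> ^ 4 / (real d)\<^sup>2 * (2 * (V - d)\<^sup>2 + 16 * (real s * u)\<^sup>2 + 16 * E\<^sup>2)"
    using z by (intro mult_left_mono) auto
  finally show ?thesis by (simp add: V_def E_def sum_subtractf)
qed

lemma integral_PiM_prod_subset:
  fixes h :: "'i \<Rightarrow> 'a \<Rightarrow> real"
  assumes P: "prob_space P" and "finite I" "J \<subseteq> I" and h: "\<And>l. l \<in> J \<Longrightarrow> integrable P (h l)"
  shows "integrable (PiM I (\<lambda>_. P)) (\<lambda>x. \<Prod>l\<in>J. h l (x l))"
    and "(\<integral>x. (\<Prod>l\<in>J. h l (x l)) \<partial>PiM I (\<lambda>_. P)) = (\<Prod>l\<in>J. \<integral>y. h l y \<partial>P)"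
proof -
  interpret prob_space P by fact
  interpret product_sigma_finite "\<lambda>_. P"
    by (simp add: product_sigma_finite_def sigma_finite_measure_axioms)
  define F where "F l = (if l \<in> J then h l else (\<lambda>_. 1))" for l
  have F: "integrable P (F l)" for l using h by (simp add: F_def)
  have "(\<Prod>l\<in>I. F l (x l)) = (\<Prod>l\<in>J. h l (x l))" for x
    using assms by (intro prod.mono_neutral_cong_right) (auto simp: F_def)
  moreover have "(\<Prod>l\<in>I. integral\<^sup>L P (F l)) = (\<Prod>l\<in>J. integral\<^sup>L P (h l))"
    using assms by (intro prod.mono_neutral_cong_right) (auto simp: F_def prob_space)
  ultimately show "integrable (PiM I (\<lambda>_. P)) (\<lambda>x. \<Prod>l\<in>J. h l (x l))"
    and "(\<integral>x. (\<Prod>l\<in>J. h l (x l)) \<partial>PiM I (\<lambda>_. P)) = (\<Prod>l\<in>J. \<integral>y. h l y \<partial>P)"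
    using product_integrable_prod[of I F] product_integral_prod[of I F] \<open>finite I\<close> F by simp_all
qed

lemma integral_PiM_square_sum_le:
  fixes h :: "'a \<Rightarrow> real"
  assumes P: "prob_space P" and I: "finite I"
    and h: "integrable P h" and h2: "integrable P (\<lambda>y. (h y)\<^sup>2)"
  defines "M \<equiv> PiM I (\<lambda>_. P)"
  shows "integrable M (\<lambda>x. (\<Sum>i\<in>I. h (x i))\<^sup>2)"
    and "(\<integral>x. (\<Sum>i\<in>I. h (x i))\<^sup>2 \<partial>M)
      \<le> real (card I) * (\<integral>y. (h y)\<^sup>2 \<partial>P) + (real (card I))\<^sup>2 * (\<integral>y. h y \<partial>P)\<^sup>2"
proof -
  define A where "A = (\<integral>y. (h y)\<^sup>2 \<partial>P)"
  define B where "B = (\<integral>y. h y \<partial>P)\<^sup>2"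
  have sq: "(\<Sum>i\<in>I. h (x i))\<^sup>2 = (\<Sum>i\<in>I. \<Sum>j\<in>I. h (x i) * h (x j))" for x
    by (simp add: power2_eq_square sum_product)
  have pair: "integrable M (\<lambda>x. h (x i) * h (x j)) \<and>
      (\<integral>x. h (x i) * h (x j) \<partial>M) = (if i = j then A else B)" if "i \<in> I" "j \<in> I" for i j
  proof (cases "i = j")
    case True
    then show ?thesis
      using integral_PiM_prod_subset[OF P I, of "{i}" "\<lambda>_ y. (h y)\<^sup>2"] that h2
      by (simp add: M_def A_def power2_eq_square)
  next
    case False
    then show ?thesis
      using integral_PiM_prod_subset[OF P I, of "{i, j}" "\<lambda>_. h"] that h
      by (simp add: M_def B_def power2_eq_square)
  qed
  show "integrable M (\<lambda>x. (\<Sum>i\<in>I. h (x i))\<^sup>2)"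
    unfolding sq using pair by (intro Bochner_Integration.integrable_sum) auto
  have "(\<integral>x. (\<Sum>i\<in>I. h (x i))\<^sup>2 \<partial>M) = (\<Sum>i\<in>I. \<Sum>j\<in>I. if i = j then A else B)"
    unfolding sq using pair
    by (subst Bochner_Integration.integral_sum, fastforce intro: Bochner_Integration.integrable_sum)
      (auto intro!: sum.cong simp: Bochner_Integration.integral_sum)
  also have "\<dots> = (\<Sum>i\<in>I. (A - B) + real (card I) * B)"
  proof (intro sum.cong refl)
    fix i assume "i \<in> I"
    then have "(\<Sum>j\<in>I. if i = j then A else B) = (\<Sum>j\<in>I. B + (if i = j then A - B else 0))"
      by (intro sum.cong) auto
    then show "(\<Sum>j\<in>I. if i = j then A else B) = (A - B) + real (card I) * B"
      using \<open>i \<in> I\<close> I by (simp add: sum.distrib)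
  qed
  also have "\<dots> \<le> real (card I) * A + (real (card I))\<^sup>2 * B"
    using mult_nonneg_nonneg[of "real (card I)" B] by (simp add: B_def power2_eq_square algebra_simps)
  finally show "(\<integral>x. (\<Sum>i\<in>I. h (x i))\<^sup>2 \<partial>M)
      \<le> real (card I) * (\<integral>y. (h y)\<^sup>2 \<partial>P) + (real (card I))\<^sup>2 * (\<integral>y. h y \<partial>P)\<^sup>2"
    by (simp add: A_def B_def)
qed

lemma power_div_le_exp:
  assumes "0 \<le> y" "0 < m"
  shows "(y / real m) ^ m \<le> exp y"
proof -
  have "(y / real m) ^ m \<le> (1 + y / real m) ^ m"
    using assms by (intro power_mono) auto
  also have "\<dots> \<le> exp y"
    using assms by (intro exp_ge_one_plus_x_over_n_power_n) auto
  finally show ?thesis .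
qed

lemma exp_neg_powr_le:
  fixes a b \<tau> :: real
  assumes "a > 0" "b > 0" "\<tau> > 0" "m > 0"
  shows "exp (- ((b / \<tau>) powr a)) \<le> real m ^ m * \<tau> powr (a * m) / b powr (a * m)"
proof -
  define y where "y = (b / \<tau>) powr a"
  have "y > 0" using assms by (simp add: y_def)
  have "y ^ m = b powr (a * m) / \<tau> powr (a * m)"
    using \<open>y > 0\<close> assms by (simp add: y_def powr_realpow[symmetric] powr_powr powr_divide)
  moreover have "y ^ m / real m ^ m \<le> exp y"
    using power_div_le_exp[of y m] \<open>y > 0\<close> assms by (simp add: power_divide)
  then have "inverse (exp y) \<le> inverse (y ^ m / real m ^ m)"
    using \<open>y > 0\<close> assms by (intro le_imp_inverse_le) auto
  ultimately show ?thesis by (simp add: y_def exp_minus mult.commute)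
qed

lemma summable_power_mult_stretched_exp:
  fixes a \<tau> :: real
  assumes a: "a > 0" and \<tau>: "\<tau> > 0"
  shows "summable (\<lambda>k. (real k + 3) ^ n * exp (- (((real k + 2) / \<tau>) powr a)))"
proof -
  define m where "m = nat \<lceil>(n + 2) / a\<rceil>"
  have "real m \<ge> (n + 2) / a" unfolding m_def by linarith
  then have am: "a * m \<ge> n + 2" and "m > 0"
    using a by (auto simp: field_simps intro!: Nat.gr0I)
  define C where "C = 2 ^ n * (real m ^ m * \<tau> powr (a * m))"
  have term_le: "(real k + 3) ^ n * exp (- (((real k + 2) / \<tau>) powr a)) \<le> C * inverse ((2 + real k)\<^sup>2)"
    for k
  proof -
    define b where "b = real k + 2"
    have b: "b \<ge> 2" by (simp add: b_def)
    have "b ^ (n + 2) = b powr (n + 2)" using b powr_realpow[of b "n + 2"] by simp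
    also have "\<dots> \<le> b powr (a * m)" using b am by (intro powr_mono) auto
    finally have bm: "b ^ (n + 2) \<le> b powr (a * m)" .
    have "(real k + 3) ^ n * exp (- ((b / \<tau>) powr a))
        \<le> (2 * b) ^ n * (real m ^ m * \<tau> powr (a * m) / b ^ (n + 2))"
    proof (intro mult_mono)
      show "(real k + 3) ^ n \<le> (2 * b) ^ n" by (intro power_mono) (auto simp: b_def)
      have "exp (- ((b / \<tau>) powr a)) \<le> real m ^ m * \<tau> powr (a * m) / b powr (a * m)"
        using a b \<tau> \<open>m > 0\<close> by (intro exp_neg_powr_le) auto
      also have "\<dots> \<le> real m ^ m * \<tau> powr (a * m) / b ^ (n + 2)"
        using b bm by (intro divide_left_mono) auto
      finally show "exp (- ((b / \<tau>) powr a)) \<le> real m ^ m * \<tau> powr (a * m) / b ^ (n + 2)" .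
    qed (use b in auto)
    also have "\<dots> = C * inverse (b\<^sup>2)"
      using b by (simp add: C_def field_simps power2_eq_square)
    finally show ?thesis by (simp add: b_def add.commute)
  qed
  have "summable (\<lambda>k. C * inverse ((2 + real k)\<^sup>2))"
    by (intro summable_mult Polygamma_converges') auto
  then show ?thesis
    by (rule summable_comparison_test'[of _ 0]) (use term_le in auto)
qed

lemma abs_power_le_tail_series:
  fixes x :: real
  shows "ennreal (\<bar>x\<bar> ^ n) \<le> 3 ^ n + (\<Sum>k. ennreal ((real k + 3) ^ n) * indicator {y. real k + 2 < \<bar>y\<bar>} x)"
proof (cases "\<bar>x\<bar> \<le> 3")
  case True
  then have "\<bar>x\<bar> ^ n \<le> 3 ^ n" by (intro power_mono) auto
  then have "ennreal (\<bar>x\<bar> ^ n) \<le> ennreal (3 ^ n)" by (rule ennreal_leI)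
  then have "ennreal (\<bar>x\<bar> ^ n) \<le> 3 ^ n" by (simp only: ennreal_power[symmetric] ennreal_numeral)
  then show ?thesis by (rule order_trans) simp
next
  case False
  define k where "k = nat (\<lceil>\<bar>x\<bar>\<rceil> - 3)"
  have "real k + 2 < \<bar>x\<bar>" "\<bar>x\<bar> \<le> real k + 3"
    using False by (simp_all add: k_def) linarith+
  then have "ennreal (\<bar>x\<bar> ^ n) \<le> ennreal ((real k + 3) ^ n) * indicator {y. real k + 2 < \<bar>y\<bar>} x"
    by (simp add: ennreal_leI power_mono)
  also have "\<dots> \<le> (\<Sum>k. ennreal ((real k + 3) ^ n) * indicator {y. real k + 2 < \<bar>y\<bar>} x)"
    using sum_le_suminf[OF summableI, of "{k}"] by simp
  finally show ?thesis by (rule order_trans) simp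
qed

lemma nn_integral_abs_power_le:
  fixes P :: "real measure" and a \<tau> :: real
  assumes "a > 0" "\<tau> > 0" and P: "prob_space P" "sets P = sets borel"
    and tail: "\<And>t. t \<ge> 2 \<Longrightarrow> measure P {x. \<bar>x\<bar> > t} \<le> 2 * exp (- ((t / \<tau>) powr a))"
  shows "(\<integral>\<^sup>+x. ennreal (\<bar>x\<bar> ^ n) \<partial>P)
    \<le> ennreal (3 ^ n + 2 * (\<Sum>k. (real k + 3) ^ n * exp (- (((real k + 2) / \<tau>) powr a))))"
proof -
  interpret prob_space P by fact
  define g where "g = (\<lambda>k. (real k + 3) ^ n * exp (- (((real k + 2) / \<tau>) powr a)))"
  have g: "summable g" "\<And>k. g k \<ge> 0"
    using summable_power_mult_stretched_exp[OF assms(1,2)] by (auto simp: g_def)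
  have sets: "{x. real k + 2 < \<bar>x\<bar>} \<in> sets P" for k
    using P(2) by (simp add: sets_eq_imp_space_eq[OF P(2)])
  have "(\<integral>\<^sup>+x. ennreal (\<bar>x\<bar> ^ n) \<partial>P)
      \<le> (\<integral>\<^sup>+x. 3 ^ n + (\<Sum>k. ennreal ((real k + 3) ^ n) * indicator {y. real k + 2 < \<bar>y\<bar>} x) \<partial>P)"
    by (intro nn_integral_mono abs_power_le_tail_series)
  also have "\<dots> = 3 ^ n + (\<Sum>k. ennreal ((real k + 3) ^ n) * emeasure P {x. real k + 2 < \<bar>x\<bar>})"
    using sets emeasure_space_1
    by (subst nn_integral_add) (auto simp: nn_integral_suminf nn_integral_cmult_indicator)
  also have "\<dots> \<le> 3 ^ n + (\<Sum>k. ennreal (2 * g k))"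
  proof (intro add_mono order_refl suminf_le summableI)
    fix k
    have "emeasure P {x. real k + 2 < \<bar>x\<bar>} \<le> ennreal (2 * exp (- (((real k + 2) / \<tau>) powr a)))"
      using tail[of "real k + 2"] by (simp add: emeasure_eq_measure ennreal_leI)
    then have "ennreal ((real k + 3) ^ n) * emeasure P {x. real k + 2 < \<bar>x\<bar>}
        \<le> ennreal ((real k + 3) ^ n) * ennreal (2 * exp (- (((real k + 2) / \<tau>) powr a)))"
      by (rule mult_left_mono) simp
    also have "\<dots> = ennreal (2 * g k)"
      by (simp add: g_def ennreal_mult[symmetric] mult.left_commute)
    finally show "ennreal ((real k + 3) ^ n) * emeasure P {x. real k + 2 < \<bar>x\<bar>} \<le> ennreal (2 * g k)" .
  qed
  also have "\<dots> = ennreal (3 ^ n + 2 * suminf g)"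
    using g suminf_nonneg[OF g] ennreal_plus[of "3 ^ n" "2 * suminf g"]
    by (simp add: suminf_ennreal2 suminf_mult ennreal_power[symmetric])
  finally show ?thesis by (simp add: g_def)
qed

lemma noise_class_moment_bound:
  fixes a \<tau> :: real
  assumes "a > 0" "\<tau> > 0"
  obtains K where "K \<ge> 0" "\<And>P. noise_class a \<tau> P \<Longrightarrow> integrable P (\<lambda>x. x ^ n) \<and> (\<integral>x. x ^ n \<partial>P) \<le> K"
proof -
  define K where "K = 3 ^ n + 2 * (\<Sum>k. (real k + 3) ^ n * exp (- (((real k + 2) / \<tau>) powr a)))"
  have "K \<ge> 0"
    using summable_power_mult_stretched_exp[OF assms] by (simp add: K_def suminf_nonneg)
  moreover have "integrable P (\<lambda>x. x ^ n) \<and> (\<integral>x. x ^ n \<partial>P) \<le> K" if "noise_class a \<tau> P" for P :: "real measure"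
  proof -
    have P: "prob_space P" "sets P = sets borel"
      and nn: "(\<integral>\<^sup>+x. ennreal (\<bar>x\<bar> ^ n) \<partial>P) \<le> ennreal K"
      using that nn_integral_abs_power_le[OF assms] unfolding K_def noise_class_def by auto
    have meas: "(\<lambda>x::real. x ^ n) \<in> borel_measurable P"
      by (subst measurable_cong_sets[OF P(2) refl]) simp
    have int: "integrable P (\<lambda>x. x ^ n)"
      using nn by (intro integrableI_bounded[OF meas]) (auto simp: power_abs ennreal_less_top
          intro: order.strict_trans1)
    have int_abs: "integrable P (\<lambda>x. \<bar>x\<bar> ^ n)"
      using integrable_abs[OF int] by (simp add: power_abs)
    have "(\<integral>x. x ^ n \<partial>P) \<le> (\<integral>x. \<bar>x\<bar> ^ n \<partial>P)"
      using int int_abs by (intro integral_mono) (metis abs_ge_self power_abs)+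
    also have "\<dots> \<le> K"
    proof -
      have "ennreal (\<integral>x. \<bar>x\<bar> ^ n \<partial>P) = (\<integral>\<^sup>+x. ennreal (\<bar>x\<bar> ^ n) \<partial>P)"
        using int_abs by (intro nn_integral_eq_integral[symmetric]) auto
      then have "ennreal (\<integral>x. \<bar>x\<bar> ^ n \<partial>P) \<le> ennreal K" using nn by simp
      then show ?thesis using \<open>K \<ge> 0\<close> ennreal_le_iff by blast
    qed
    finally show ?thesis using int by simp
  qed
  ultimately show ?thesis using that by blast
qed

lemma le_amgm_square:
  fixes y t :: real
  assumes "0 \<le> y" "0 < t"
  shows "y \<le> (t * y\<^sup>2 + 1 / t) / 2"
proof -
  have "0 \<le> (t * y - 1)\<^sup>2" by simp
  then have "2 * t * y \<le> (t * y)\<^sup>2 + 1" by (simp add: power2_eq_square algebra_simps)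
  then show ?thesis using assms by (simp add: field_simps power2_eq_square)
qed

lemma integral_le_of_square_le_on:
  fixes h q :: "'a \<Rightarrow> real"
  assumes P: "prob_space P" and A: "A \<in> sets P"
    and h: "h \<in> borel_measurable P" and q: "integrable P q"
    and h0: "\<And>x. 0 \<le> h x" and q0: "\<And>x. 0 \<le> q x"
    and outside: "\<And>x. x \<notin> A \<Longrightarrow> h x = 0" and inside: "\<And>x. x \<in> A \<Longrightarrow> (h x)\<^sup>2 \<le> q x"
    and t: "t > 0"
  shows "integrable P h" and "(\<integral>x. h x \<partial>P) \<le> (t * (\<integral>x. q x \<partial>P) + measure P A / t) / 2"
proof -
  interpret prob_space P by fact
  define b where "b = (\<lambda>x. (t * q x + indicator A x / t) / 2)"
  have b: "integrable P b"
    using q A by (simp add: b_def integrable_real_indicator emeasure_eq_measure)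
  have hb: "h x \<le> b x" for x
  proof (cases "x \<in> A")
    case True
    have "h x \<le> (t * (h x)\<^sup>2 + 1 / t) / 2" using h0 t by (rule le_amgm_square)
    also have "\<dots> \<le> b x" using inside[OF True] t by (simp add: b_def True)
    finally show ?thesis .
  qed (use outside q0 t in \<open>simp add: b_def\<close>)
  show int: "integrable P h"
    using h0 hb by (intro Bochner_Integration.integrable_bound[OF b h] AE_I2)
      (auto intro: order_trans[OF _ abs_ge_self])
  have "(\<integral>x. h x \<partial>P) \<le> (\<integral>x. b x \<partial>P)"
    using int b hb by (rule integral_mono)
  also have "\<dots> = (t * (\<integral>x. q x \<partial>P) + measure P A / t) / 2"
    using q A by (simp add: b_def integrable_real_indicator emeasure_eq_measure)
  finally show "(\<integral>x. h x \<partial>P) \<le> (t * (\<integral>x. q x \<partial>P) + measure P A / t) / 2" .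
qed

lemma integral_PiM_centered_square_sum_le:
  fixes P :: "real measure" and d :: nat
  assumes P: "prob_space P" and m2: "integrable P (\<lambda>x. x\<^sup>2)" "(\<integral>x. x\<^sup>2 \<partial>P) = 1"
    and m4: "integrable P (\<lambda>x. x ^ 4)"
  defines "M \<equiv> PiM {..<d} (\<lambda>_. P)"
  shows "integrable M (\<lambda>\<xi>. (\<Sum>i<d. (\<xi> i)\<^sup>2 - 1)\<^sup>2)"
    and "(\<integral>\<xi>. (\<Sum>i<d. (\<xi> i)\<^sup>2 - 1)\<^sup>2 \<partial>M) \<le> real d * ((\<integral>x. x ^ 4 \<partial>P) - 1)"
proof -
  interpret prob_space P by fact
  have sq: "((x::real)\<^sup>2 - 1)\<^sup>2 = x ^ 4 - 2 * x\<^sup>2 + 1" for x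
    by (simp add: power2_eq_square power4_eq_xxxx algebra_simps)
  have h: "integrable P (\<lambda>x. x\<^sup>2 - 1)" "integrable P (\<lambda>x. (x\<^sup>2 - 1)\<^sup>2)"
    using m2 m4 by (simp_all add: sq)
  have "(\<integral>x. x\<^sup>2 - 1 \<partial>P) = 0" "(\<integral>x. (x\<^sup>2 - 1)\<^sup>2 \<partial>P) = (\<integral>x. x ^ 4 \<partial>P) - 1"
    using m2 m4 by (simp_all add: sq prob_space)
  then show "integrable M (\<lambda>\<xi>. (\<Sum>i<d. (\<xi> i)\<^sup>2 - 1)\<^sup>2)"
    and "(\<integral>\<xi>. (\<Sum>i<d. (\<xi> i)\<^sup>2 - 1)\<^sup>2 \<partial>M) \<le> real d * ((\<integral>x. x ^ 4 \<partial>P) - 1)"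
    using integral_PiM_square_sum_le[OF P _ h, of "{..<d}"] by (simp_all add: M_def)
qed

lemma integral_excess_bounds:
  fixes P :: "real measure" and r t :: real
  assumes P: "prob_space P" "sets P = sets borel"
    and m4: "integrable P (\<lambda>x. x ^ 4)" and m8: "integrable P (\<lambda>x. x ^ 8)"
    and "r \<ge> 0" "t > 0"
  defines "W \<equiv> \<lambda>x. max 0 (x\<^sup>2 - r\<^sup>2)"
  shows "integrable P W"
    and "(\<integral>x. W x \<partial>P) \<le> (t * (\<integral>x. x ^ 4 \<partial>P) + measure P {x. r < \<bar>x\<bar>} / t) / 2"
    and "integrable P (\<lambda>x. (W x)\<^sup>2)"
    and "(\<integral>x. (W x)\<^sup>2 \<partial>P) \<le> (t * (\<integral>x. x ^ 8 \<partial>P) + measure P {x. r < \<bar>x\<bar>} / t) / 2"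
proof -
  have A: "{x. r < \<bar>x\<bar>} \<in> sets P"
    using P(2) by (simp add: sets_eq_imp_space_eq[OF P(2)])
  have W: "W \<in> borel_measurable P"
    unfolding W_def by (subst measurable_cong_sets[OF P(2) refl]) simp
  have W_le: "0 \<le> W x" "W x \<le> x\<^sup>2" for x by (simp_all add: W_def)
  have outside: "W x = 0" if "x \<notin> {x. r < \<bar>x\<bar>}" for x
  proof -
    have "x\<^sup>2 \<le> r\<^sup>2" using that \<open>r \<ge> 0\<close> abs_le_square_iff[of x r] by auto
    then show ?thesis by (simp add: W_def)
  qed
  have W2: "(W x)\<^sup>2 \<le> x ^ 4" "((W x)\<^sup>2)\<^sup>2 \<le> x ^ 8" for x
  proof -
    show "(W x)\<^sup>2 \<le> x ^ 4"
      using power_mono[OF W_le(2)[of x] W_le(1)[of x], of 2] by (simp flip: power_mult)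
    then show "((W x)\<^sup>2)\<^sup>2 \<le> x ^ 8"
      using power_mono[of "(W x)\<^sup>2" "x ^ 4" 2] by (simp flip: power_mult)
  qed
  show "integrable P W"
    and "(\<integral>x. W x \<partial>P) \<le> (t * (\<integral>x. x ^ 4 \<partial>P) + measure P {x. r < \<bar>x\<bar>} / t) / 2"
    using integral_le_of_square_le_on[OF P(1) A W m4 W_le(1) _ outside W2(1) \<open>t > 0\<close>] by simp_all
  show "integrable P (\<lambda>x. (W x)\<^sup>2)"
    and "(\<integral>x. (W x)\<^sup>2 \<partial>P) \<le> (t * (\<integral>x. x ^ 8 \<partial>P) + measure P {x. r < \<bar>x\<bar>} / t) / 2"
    using integral_le_of_square_le_on[OF P(1) A _ m8 _ _ _ W2(2) \<open>t > 0\<close>] W outside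
    by simp_all
qed

lemma integral_PiM_excess_square_sum_le:
  fixes P :: "real measure" and d :: nat and r t K4 K8 :: real
  assumes P: "prob_space P" "sets P = sets borel"
    and m4: "integrable P (\<lambda>x. x ^ 4)" "(\<integral>x. x ^ 4 \<partial>P) \<le> K4"
    and m8: "integrable P (\<lambda>x. x ^ 8)" "(\<integral>x. x ^ 8 \<partial>P) \<le> K8"
    and "r \<ge> 0" "t > 0" and tail: "measure P {x. r < \<bar>x\<bar>} \<le> 2 * t\<^sup>2"
  defines "M \<equiv> PiM {..<d} (\<lambda>_. P)"
  shows "integrable M (\<lambda>\<xi>. (\<Sum>i<d. max 0 ((\<xi> i)\<^sup>2 - r\<^sup>2))\<^sup>2)"
    and "(\<integral>\<xi>. (\<Sum>i<d. max 0 ((\<xi> i)\<^sup>2 - r\<^sup>2))\<^sup>2 \<partial>M)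
      \<le> real d * (t * (K8 + 2) / 2) + (real d)\<^sup>2 * (t * (K4 + 2) / 2)\<^sup>2"
proof -
  note W = integral_excess_bounds[OF P m4(1) m8(1) \<open>r \<ge> 0\<close> \<open>t > 0\<close>]
  have tail': "measure P {x. r < \<bar>x\<bar>} / t \<le> 2 * t"
    using tail \<open>t > 0\<close> by (simp add: divide_le_eq power2_eq_square mult.assoc)
  have "t * (\<integral>x. x ^ 4 \<partial>P) \<le> t * K4" "t * (\<integral>x. x ^ 8 \<partial>P) \<le> t * K8"
    using m4(2) m8(2) \<open>t > 0\<close> by simp_all
  then have W1: "(\<integral>x. max 0 (x\<^sup>2 - r\<^sup>2) \<partial>P) \<le> t * (K4 + 2) / 2"
    and W2: "(\<integral>x. (max 0 (x\<^sup>2 - r\<^sup>2))\<^sup>2 \<partial>P) \<le> t * (K8 + 2) / 2"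
    using W(2,4) tail' by (simp_all add: algebra_simps)
  have "(\<integral>x. max 0 (x\<^sup>2 - r\<^sup>2) \<partial>P)\<^sup>2 \<le> (t * (K4 + 2) / 2)\<^sup>2"
    using W1 by (intro power_mono) auto
  then have "real d * (\<integral>x. (max 0 (x\<^sup>2 - r\<^sup>2))\<^sup>2 \<partial>P) + (real d)\<^sup>2 * (\<integral>x. max 0 (x\<^sup>2 - r\<^sup>2) \<partial>P)\<^sup>2
      \<le> real d * (t * (K8 + 2) / 2) + (real d)\<^sup>2 * (t * (K4 + 2) / 2)\<^sup>2"
    using W2 by (intro add_mono mult_left_mono) auto
  then show "integrable M (\<lambda>\<xi>. (\<Sum>i<d. max 0 ((\<xi> i)\<^sup>2 - r\<^sup>2))\<^sup>2)"
    and "(\<integral>\<xi>. (\<Sum>i<d. max 0 ((\<xi> i)\<^sup>2 - r\<^sup>2))\<^sup>2 \<partial>M)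
      \<le> real d * (t * (K8 + 2) / 2) + (real d)\<^sup>2 * (t * (K4 + 2) / 2)\<^sup>2"
    using integral_PiM_square_sum_le[OF P(1) _ W(1,3), of "{..<d}"] by (auto simp: M_def)
qed

lemma sigma_hat_sq_risk_le:
  fixes P :: "real measure" and \<theta> :: "nat \<Rightarrow> real" and d s :: nat and r \<sigma> K4 K8 :: real
  assumes P: "prob_space P" "sets P = sets borel"
    and m2: "integrable P (\<lambda>x. x\<^sup>2)" "(\<integral>x. x\<^sup>2 \<partial>P) = 1"
    and m4: "integrable P (\<lambda>x. x ^ 4)" "(\<integral>x. x ^ 4 \<partial>P) \<le> K4"
    and m8: "integrable P (\<lambda>x. x ^ 8)" "(\<integral>x. x ^ 8 \<partial>P) \<le> K8"
    and "r \<ge> 0" and tail: "measure P {x. r < \<bar>x\<bar>} \<le> 2 * (s / d)\<^sup>2"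
    and \<theta>: "\<theta> \<in> sparse_vecs d s" and pos: "0 < s" "0 < d" "0 < \<sigma>"
  shows "(\<integral>\<^sup>+\<xi>. ennreal ((sigma_hat_sq d s (obs \<theta> \<sigma> \<xi>) - \<sigma>\<^sup>2)\<^sup>2) \<partial>PiM {..<d} (\<lambda>_. P))
    \<le> ennreal (\<sigma> ^ 4 * (2 * K4 / d + 16 * (s / d)\<^sup>2 * r ^ 4
                          + 8 * (K8 + 2) * (s / d) / d + 4 * (K4 + 2)\<^sup>2 * (s / d)\<^sup>2))"
proof -
  let ?M = "PiM {..<d} (\<lambda>_. P)"
  define t where "t = real s / real d"
  define G where "G = (\<lambda>\<xi>. 2 * (\<Sum>i<d. (\<xi> i)\<^sup>2 - 1)\<^sup>2 + 16 * (real s * r\<^sup>2)\<^sup>2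
    + 16 * (\<Sum>i<d. max 0 ((\<xi> i)\<^sup>2 - r\<^sup>2))\<^sup>2)"
  note D1 = integral_PiM_centered_square_sum_le[OF P(1) m2 m4(1), of d]
  have "t > 0" using pos by (simp add: t_def)
  note D2 = integral_PiM_excess_square_sum_le[OF P m4 m8 \<open>r \<ge> 0\<close> \<open>t > 0\<close> tail[folded t_def], of d]
  interpret M: prob_space ?M using P(1) by (intro prob_space_PiM) auto
  have G: "integrable ?M G" using D1(1) D2(1) by (simp add: G_def)
  have "(\<integral>\<xi>. G \<xi> \<partial>?M) \<le> 2 * (real d * K4) + 16 * (real s * r\<^sup>2)\<^sup>2
      + 16 * (real d * (t * (K8 + 2) / 2) + (real d)\<^sup>2 * (t * (K4 + 2) / 2)\<^sup>2)"
  proof -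
    have "real d * ((\<integral>x. x ^ 4 \<partial>P) - 1) \<le> real d * K4"
      using m4(2) by (intro mult_left_mono) auto
    with D1(2) have E1: "(\<integral>\<xi>. (\<Sum>i<d. (\<xi> i)\<^sup>2 - 1)\<^sup>2 \<partial>?M) \<le> real d * K4"
      by (rule order_trans)
    have "(\<integral>\<xi>. G \<xi> \<partial>?M) = 2 * (\<integral>\<xi>. (\<Sum>i<d. (\<xi> i)\<^sup>2 - 1)\<^sup>2 \<partial>?M)
        + 16 * (real s * r\<^sup>2)\<^sup>2 + 16 * (\<integral>\<xi>. (\<Sum>i<d. max 0 ((\<xi> i)\<^sup>2 - r\<^sup>2))\<^sup>2 \<partial>?M)"
      using D1(1) D2(1) by (simp add: G_def M.prob_space)
    then show ?thesis using E1 D2(2) by (simp only:) (intro add_mono mult_left_mono order_refl; simp)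
  qed
  also have "\<dots> = (real d)\<^sup>2 * (2 * K4 / d + 16 * t\<^sup>2 * r ^ 4 + 8 * (K8 + 2) * t / d + 4 * (K4 + 2)\<^sup>2 * t\<^sup>2)"
    using \<open>0 < d\<close> by (simp add: t_def field_simps power2_eq_square power4_eq_xxxx)
  finally have "(\<integral>\<xi>. G \<xi> \<partial>?M) / (real d)\<^sup>2
      \<le> 2 * K4 / d + 16 * t\<^sup>2 * r ^ 4 + 8 * (K8 + 2) * t / d + 4 * (K4 + 2)\<^sup>2 * t\<^sup>2"
    using \<open>0 < d\<close> by (simp add: divide_le_eq mult.commute)
  then have "\<sigma> ^ 4 * ((\<integral>\<xi>. G \<xi> \<partial>?M) / (real d)\<^sup>2)
      \<le> \<sigma> ^ 4 * (2 * K4 / d + 16 * t\<^sup>2 * r ^ 4 + 8 * (K8 + 2) * t / d + 4 * (K4 + 2)\<^sup>2 * t\<^sup>2)"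
    by (rule mult_left_mono) simp
  then have EG: "\<sigma> ^ 4 / (real d)\<^sup>2 * (\<integral>\<xi>. G \<xi> \<partial>?M)
      \<le> \<sigma> ^ 4 * (2 * K4 / d + 16 * t\<^sup>2 * r ^ 4 + 8 * (K8 + 2) * t / d + 4 * (K4 + 2)\<^sup>2 * t\<^sup>2)"
    by simp
  have "(\<integral>\<^sup>+\<xi>. ennreal ((sigma_hat_sq d s (obs \<theta> \<sigma> \<xi>) - \<sigma>\<^sup>2)\<^sup>2) \<partial>?M)
      \<le> (\<integral>\<^sup>+\<xi>. ennreal (\<sigma> ^ 4 / (real d)\<^sup>2 * G \<xi>) \<partial>?M)"
    using sigma_hat_sq_error_le[where \<theta> = \<theta> and d = d and s = s and \<sigma> = \<sigma> and u = "r\<^sup>2"] \<theta> pos \<open>r \<ge> 0\<close>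
    unfolding G_def sparse_vecs_def by (intro nn_integral_mono ennreal_leI) simp
  also have "\<dots> = ennreal (\<sigma> ^ 4 / (real d)\<^sup>2 * (\<integral>\<xi>. G \<xi> \<partial>?M))"
    using G by (subst nn_integral_eq_integral) (auto simp: G_def)
  finally show ?thesis using EG by (simp add: t_def order_trans ennreal_leI)
qed

lemma stretched_exp_threshold:
  fixes a \<tau> L :: real
  assumes "a > 0" "\<tau> > 0" "L \<ge> 1"
  defines "r \<equiv> max 2 (\<tau> * (2 * L) powr (1 / a))"
  shows "exp (- ((r / \<tau>) powr a)) \<le> exp (- (2 * L))"
    and "r\<^sup>2 \<le> (4 + \<tau>\<^sup>2 * 2 powr (2 / a)) * L powr (2 / a)"
proof -
  have "(2 * L) powr (1 / a) \<le> r / \<tau>" using assms by (simp add: r_def field_simps)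
  then have "((2 * L) powr (1 / a)) powr a \<le> (r / \<tau>) powr a"
    using assms by (intro powr_mono2) auto
  then show "exp (- ((r / \<tau>) powr a)) \<le> exp (- (2 * L))"
    using assms by (simp add: powr_powr)
  have "((2 * L) powr (1 / a))\<^sup>2 = 2 powr (2 / a) * L powr (2 / a)"
    using assms by (simp add: powr_realpow[symmetric] powr_powr powr_mult)
  then have "r\<^sup>2 \<le> 4 + \<tau>\<^sup>2 * (2 powr (2 / a) * L powr (2 / a))"
    by (simp add: r_def max_def power_mult_distrib)
  also have "\<dots> \<le> (4 + \<tau>\<^sup>2 * 2 powr (2 / a)) * L powr (2 / a)"
    using assms ge_one_powr_ge_zero[of L "2 / a"] by (simp add: algebra_simps)
  finally show "r\<^sup>2 \<le> (4 + \<tau>\<^sup>2 * 2 powr (2 / a)) * L powr (2 / a)" .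
qed

lemma ln_sparsity_bounds:
  fixes s d :: real
  assumes "0 < s" "s < d"
  defines "L \<equiv> ln (exp 1 * d / s)"
  shows "1 \<le> L" and "exp (- (2 * L)) \<le> (s / d)\<^sup>2"
proof -
  have "exp 1 \<le> exp 1 * d / s" using assms by (simp add: field_simps)
  then show "1 \<le> L" unfolding L_def using ln_mono[of "exp 1"] by fastforce
  have "exp (- L) = s / (exp 1 * d)" using assms by (simp add: L_def exp_minus)
  then have "exp (- (2 * L)) = (s / (exp 1 * d))\<^sup>2"
    by (metis mult_2 minus_add_distrib mult_exp_exp power2_eq_square)
  also have "\<dots> \<le> (s / d)\<^sup>2"
    using assms by (intro power_mono divide_left_mono) auto
  finally show "exp (- (2 * L)) \<le> (s / d)\<^sup>2" .
qed

lemma risk_rate_le: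
  fixes d t \<Lambda> r c K4 K8 :: real
  assumes "0 < d" "0 < t" "t \<le> 1" "1 \<le> \<Lambda>" "r\<^sup>2 \<le> c * \<Lambda>" "0 \<le> K4" "0 \<le> K8"
  defines "m \<equiv> max (1 / sqrt d) (t * \<Lambda>)"
  shows "2 * K4 / d + 16 * t\<^sup>2 * r ^ 4 + 8 * (K8 + 2) * t / d + 4 * (K4 + 2)\<^sup>2 * t\<^sup>2
    \<le> (2 * K4 + 16 * c\<^sup>2 + 8 * (K8 + 2) + 4 * (K4 + 2)\<^sup>2) * m\<^sup>2"
proof -
  have "(1 / sqrt d)\<^sup>2 \<le> m\<^sup>2" using assms unfolding m_def by (intro power_mono) auto
  then have d: "1 / d \<le> m\<^sup>2" using assms by (simp add: power_divide)
  have tL: "(t * \<Lambda>)\<^sup>2 \<le> m\<^sup>2" using assms unfolding m_def by (intro power_mono) auto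
  have "r ^ 4 \<le> (c * \<Lambda>)\<^sup>2"
    using power_mono[OF assms(5), of 2] by (simp flip: power_mult)
  then have "t\<^sup>2 * r ^ 4 \<le> c\<^sup>2 * (t * \<Lambda>)\<^sup>2"
    using mult_left_mono[of "r ^ 4" "(c * \<Lambda>)\<^sup>2" "t\<^sup>2"] by (simp add: power_mult_distrib algebra_simps)
  also have "\<dots> \<le> c\<^sup>2 * m\<^sup>2" using tL by (intro mult_left_mono) auto
  finally have 1: "16 * t\<^sup>2 * r ^ 4 \<le> 16 * c\<^sup>2 * m\<^sup>2" by simp
  have "t / d \<le> 1 / d" using assms by (intro divide_right_mono) auto
  then have 2: "8 * (K8 + 2) * t / d \<le> 8 * (K8 + 2) * m\<^sup>2"
    using d assms mult_left_mono[of "t / d" "m\<^sup>2" "8 * (K8 + 2)"] by simp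
  have "t\<^sup>2 \<le> (t * \<Lambda>)\<^sup>2" using assms by (intro power_mono) auto
  then have 3: "4 * (K4 + 2)\<^sup>2 * t\<^sup>2 \<le> 4 * (K4 + 2)\<^sup>2 * m\<^sup>2"
    using tL by (intro mult_left_mono) auto
  have 4: "2 * K4 / d \<le> 2 * K4 * m\<^sup>2"
    using mult_left_mono[OF d, of "2 * K4"] assms by simp
  show ?thesis using 1 2 3 4 by (simp add: algebra_simps)
qed

lemma sigma_hat_sq_risk_le_rate:
  fixes a \<tau> \<sigma> K4 K8 :: real and P :: "real measure" and d s :: nat and \<theta> :: "nat \<Rightarrow> real"
  assumes "a > 0" "\<tau> > 0" and P: "noise_class a \<tau> P"
    and m4: "integrable P (\<lambda>x. x ^ 4)" "(\<integral>x. x ^ 4 \<partial>P) \<le> K4" "0 \<le> K4"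
    and m8: "integrable P (\<lambda>x. x ^ 8)" "(\<integral>x. x ^ 8 \<partial>P) \<le> K8" "0 \<le> K8"
    and s: "1 \<le> s" "2 * s < d" and "\<sigma> > 0" "\<theta> \<in> sparse_vecs d s"
  defines "c \<equiv> 4 + \<tau>\<^sup>2 * 2 powr (2 / a)"
  shows "(\<integral>\<^sup>+ \<xi>. ennreal ((sigma_hat_sq d s (obs \<theta> \<sigma> \<xi>) - \<sigma>\<^sup>2)\<^sup>2) \<partial>(PiM {..<d} (\<lambda>_. P)))
    \<le> ennreal ((2 * K4 + 16 * c\<^sup>2 + 8 * (K8 + 2) + 4 * (K4 + 2)\<^sup>2) * \<sigma> ^ 4 *
         (max (1 / sqrt (real d)) (real s / real d * (ln (exp 1 * real d / real s)) powr (2 / a)))\<^sup>2)"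
proof -
  define L where "L = ln (exp 1 * real d / real s)"
  \<comment> \<open>the tail bound of the noise class is only assumed beyond 2\<close>
  define r where "r = max 2 (\<tau> * (2 * L) powr (1 / a))"
  have P': "prob_space P" "sets P = sets borel" "integrable P (\<lambda>x. x\<^sup>2)" "(\<integral>x. x\<^sup>2 \<partial>P) = 1"
    and tail: "\<And>t. t \<ge> 2 \<Longrightarrow> measure P {x. \<bar>x\<bar> > t} \<le> 2 * exp (- ((t / \<tau>) powr a))"
    using P by (auto simp: noise_class_def)
  have L: "1 \<le> L" "exp (- (2 * L)) \<le> (real s / real d)\<^sup>2"
    using ln_sparsity_bounds[of s d] s by (simp_all add: L_def)
  note threshold = stretched_exp_threshold[OF assms(1,2) L(1), folded r_def c_def]
  have "r \<ge> 2" by (simp add: r_def)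
  then have "measure P {x. r < \<bar>x\<bar>} \<le> 2 * (real s / real d)\<^sup>2"
    using tail threshold(1) L(2) by (meson mult_left_mono order_trans zero_le_numeral)
  then have "(\<integral>\<^sup>+ \<xi>. ennreal ((sigma_hat_sq d s (obs \<theta> \<sigma> \<xi>) - \<sigma>\<^sup>2)\<^sup>2) \<partial>(PiM {..<d} (\<lambda>_. P)))
    \<le> ennreal (\<sigma> ^ 4 * (2 * K4 / d + 16 * (s / d)\<^sup>2 * r ^ 4
                        + 8 * (K8 + 2) * (s / d) / d + 4 * (K4 + 2)\<^sup>2 * (s / d)\<^sup>2))"
    using m4 m8 s \<open>\<sigma> > 0\<close> \<open>\<theta> \<in> sparse_vecs d s\<close>
    by (intro sigma_hat_sq_risk_le[OF P']) (auto simp: r_def)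
  also have "\<dots> \<le> ennreal ((2 * K4 + 16 * c\<^sup>2 + 8 * (K8 + 2) + 4 * (K4 + 2)\<^sup>2) * \<sigma> ^ 4 *
               (max (1 / sqrt (real d)) (real s / real d * L powr (2 / a)))\<^sup>2)"
    using risk_rate_le[OF _ _ _ _ threshold(2) m4(3) m8(3), of d "s / d"] s L(1) \<open>\<sigma> > 0\<close>
      ge_one_powr_ge_zero[OF L(1), of "2 / a"] assms(1)
    by (intro ennreal_leI) (simp add: mult_left_mono mult.assoc mult.left_commute)
  finally show ?thesis by (simp add: L_def)
qed

theorem theorem3:
  fixes a \<tau> :: real
  assumes "a > 0" and "\<tau> > 0"
  shows "\<exists>C>0. \<forall>(d::nat) (s::nat) P (\<sigma>::real) \<theta>.
           1 \<le> s \<longrightarrow> 2 * s < d \<longrightarrow> noise_class a \<tau> P \<longrightarrow> \<sigma> > 0 \<longrightarrow>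
           \<theta> \<in> sparse_vecs d s \<longrightarrow>
           (\<integral>\<^sup>+ \<xi>. ennreal ((sigma_hat_sq d s (obs \<theta> \<sigma> \<xi>) - \<sigma>\<^sup>2)\<^sup>2) \<partial>(PiM {..<d} (\<lambda>_. P)))
             \<le> ennreal (C * \<sigma> ^ 4 *
                 (max (1 / sqrt (real d))
                      (real s / real d * (ln (exp 1 * real d / real s)) powr (2 / a)))\<^sup>2)"
proof -
  obtain K4 where K4: "K4 \<ge> 0" "\<And>P. noise_class a \<tau> P \<Longrightarrow> integrable P (\<lambda>x. x ^ 4) \<and> (\<integral>x. x ^ 4 \<partial>P) \<le> K4"
    using noise_class_moment_bound[OF assms, where n = 4] by blast
  obtain K8 where K8: "K8 \<ge> 0" "\<And>P. noise_class a \<tau> P \<Longrightarrow> integrable P (\<lambda>x. x ^ 8) \<and> (\<integral>x. x ^ 8 \<partial>P) \<le> K8"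
    using noise_class_moment_bound[OF assms, where n = 8] by blast
  define C where "C = 2 * K4 + 16 * (4 + \<tau>\<^sup>2 * 2 powr (2 / a))\<^sup>2 + 8 * (K8 + 2) + 4 * (K4 + 2)\<^sup>2"
  have "C > 0" using K4 K8 by (simp add: C_def add_nonneg_pos)
  then show ?thesis
    using K4 K8 unfolding C_def by (blast intro: sigma_hat_sq_risk_le_rate[OF assms])
qed

end
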